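(* Let $(\mathcal{P},d)$ be a 1-2-metric and $\alpha>0$. In the greedy-routing network creation game on $(\mathcal{P},d)$ with edge price $\alpha$, every Nash equilibrium is a social optimum, and every social optimum is a Nash equilibrium.
   Context: A 1-2-metric is a finite metric space $(\mathcal{P},d)$ with $d(u,v)\in\{1,2\}$ for all distinct $u,v$. Game: the agents are the points of $\mathcal{P}$ ($n=|\mathcal{P}|\ge2$). A strategy of agent $u$ is a set $S_u\subseteq\mathcal{P}\setminus\{u\}$; a strategy profile is $\mathbf{s}=(S_u)_{u\in\mathcal{P}}$, and $(S'_u,\mathbf{s}_{-u})$ denotes $\mathbf{s}$ with $S_u$ replaced by $S'_u$. The profile defines the directed network $G(\mathbf{s})$ on $\mathcal{P}$ with arcs $(u,v)$ for $v\in S_u$, arc $(u,v)$ having length $d(u,v)$. A greedy path from $u$ to $v$ in $G$ is a directed path $u=x_1,\dots,x_j=v$ of arcs of $G$ with $d(x_i,v)>d(x_{i+1},v)$ for all $i$; its length is the sum of its arc lengths. $\mathrm{stretch}_{G}(u,v)$ equals the minimum length of a greedy path from $u$ to $v$ divided by $d(u,v)$ if such a path exists, and equals $Z$ otherwise, where $Z$ is a fixed, sufficiently large penalty constant. The cost of agent $u$ is $c_u(\mathbf{s})=\sum_{v\neq u}\mathrm{stretch}_{G(\mathbf{s})}(u,v)+\alpha|S_u|$, the social cost is $\sum_u c_u(\mathbf{s})$, and a social optimum is a profile of minimum social cost. A Nash equilibrium (NE) is a profile $\mathbf{s}$ such that $c_u(\mathbf{s})\le c_u(S'_u,\mathbf{s}_{-u})$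 for every agent $u$ and every $S'_u\subseteq\mathcal{P}\setminus\{u\}$. *)

theory Defs
  imports Complex_Main
begin

definition one_two_metric :: "'a set \<Rightarrow> ('a \<Rightarrow> 'a \<Rightarrow> real) \<Rightarrow> bool" where
  "one_two_metric P d \<longleftrightarrow>
     (\<forall>u\<in>P. d u u = 0) \<and>
     (\<forall>u\<in>P. \<forall>v\<in>P. d u v = d v u) \<and>
     (\<forall>u\<in>P. \<forall>v\<in>P. u \<noteq> v \<longrightarrow> d u v \<in> {1, 2}) \<and>
     (\<forall>u\<in>P. \<forall>v\<in>P. \<forall>w\<in>P. d u w \<le> d u v + d v w)"

definition valid_profile :: "'a set \<Rightarrow> ('a \<Rightarrow> 'a set) \<Rightarrow> bool" where
  "valid_profile P s \<longleftrightarrow> (\<forall>u\<in>P. s u \<subseteq> P - {u})"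

definition greedy_path ::
  "'a set \<Rightarrow> ('a \<Rightarrow> 'a \<Rightarrow> real) \<Rightarrow> ('a \<Rightarrow> 'a set) \<Rightarrow> 'a \<Rightarrow> 'a \<Rightarrow> 'a list \<Rightarrow> bool" where
  "greedy_path P d s u v xs \<longleftrightarrow>
     xs \<noteq> [] \<and> hd xs = u \<and> last xs = v \<and> set xs \<subseteq> P \<and>
     (\<forall>i. Suc i < length xs \<longrightarrow>
          xs ! Suc i \<in> s (xs ! i) \<and> d (xs ! Suc i) v < d (xs ! i) v)"

definition path_length :: "('a \<Rightarrow> 'a \<Rightarrow> real) \<Rightarrow> 'a list \<Rightarrow> real" where
  "path_length d xs = (\<Sum>i<length xs - 1. d (xs ! i) (xs ! Suc i))"

definition stretch ::
  "real \<Rightarrow> 'a set \<Rightarrow> ('a \<Rightarrow> 'a \<Rightarrow> real) \<Rightarrow> ('a \<Rightarrow> 'a set) \<Rightarrow> 'a \<Rightarrow> 'a \<Rightarrow> real" where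
  "stretch Z P d s u v =
     (if \<exists>xs. greedy_path P d s u v xs
      then Min {path_length d xs | xs. greedy_path P d s u v xs} / d u v
      else Z)"

definition agent_cost ::
  "real \<Rightarrow> real \<Rightarrow> 'a set \<Rightarrow> ('a \<Rightarrow> 'a \<Rightarrow> real) \<Rightarrow> ('a \<Rightarrow> 'a set) \<Rightarrow> 'a \<Rightarrow> real" where
  "agent_cost Z \<alpha> P d s u =
     (\<Sum>v\<in>P - {u}. stretch Z P d s u v) + \<alpha> * real (card (s u))"

definition social_cost ::
  "real \<Rightarrow> real \<Rightarrow> 'a set \<Rightarrow> ('a \<Rightarrow> 'a \<Rightarrow> real) \<Rightarrow> ('a \<Rightarrow> 'a set) \<Rightarrow> real" where
  "social_cost Z \<alpha> P d s = (\<Sum>u\<in>P. agent_cost Z \<alpha> P d s u)"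

definition social_optimum ::
  "real \<Rightarrow> real \<Rightarrow> 'a set \<Rightarrow> ('a \<Rightarrow> 'a \<Rightarrow> real) \<Rightarrow> ('a \<Rightarrow> 'a set) \<Rightarrow> bool" where
  "social_optimum Z \<alpha> P d s \<longleftrightarrow> valid_profile P s \<and>
     (\<forall>s'. valid_profile P s' \<longrightarrow> social_cost Z \<alpha> P d s \<le> social_cost Z \<alpha> P d s')"

definition nash_equilibrium ::
  "real \<Rightarrow> real \<Rightarrow> 'a set \<Rightarrow> ('a \<Rightarrow> 'a \<Rightarrow> real) \<Rightarrow> ('a \<Rightarrow> 'a set) \<Rightarrow> bool" where
  "nash_equilibrium Z \<alpha> P d s \<longleftrightarrow> valid_profile P s \<and>
     (\<forall>u\<in>P. \<forall>S'. S' \<subseteq> P - {u} \<longrightarrow>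
        agent_cost Z \<alpha> P d s u \<le> agent_cost Z \<alpha> P d (s(u := S')) u)"

end

theory Submission imports Defs begin

text \<open>In a 1-2-metric every greedy step towards v lowers the distance to v by at least 1, so
  after the first arc the remaining distance is at most 1 and the rest of a greedy path is a
  single arc of length 1. Hence if all unit arcs are present, the greedy paths of agent u, and so
  its cost, depend on its own strategy only, and the social cost is a sum of decoupled agent costs:
  best responses and social optimisation coincide. A missing unit arc costs the penalty Z, whereas
  buying every arc costs at most n(1 + \<alpha>); so for Z large both equilibria and optima contain all
  unit arcs.\<close>

locale one_two_metric_space =
  fixes P :: "'a set" and d :: "'a \<Rightarrow> 'a \<Rightarrow> real"
  assumes finite_points: "finite P" and metric: "one_two_metric P d"
begin

lemma dist_self: "x \<in> P \<Longrightarrow> d x x = 0"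
  using metric by (simp add: one_two_metric_def)

lemma dist_distinct: "x \<in> P \<Longrightarrow> y \<in> P \<Longrightarrow> x \<noteq> y \<Longrightarrow> d x y = 1 \<or> d x y = 2"
  using metric by (auto simp add: one_two_metric_def)

lemma dist_cases: "x \<in> P \<Longrightarrow> y \<in> P \<Longrightarrow> d x y = 0 \<or> d x y = 1 \<or> d x y = 2"
  by (cases "x = y") (auto dest: dist_self dist_distinct)

lemma dist_nonneg: "x \<in> P \<Longrightarrow> y \<in> P \<Longrightarrow> 0 \<le> d x y"
  using dist_cases by fastforce

lemma dist_less_imp_le_diff_1:
  "x \<in> P \<Longrightarrow> y \<in> P \<Longrightarrow> v \<in> P \<Longrightarrow> d y v < d x v \<Longrightarrow> d y v \<le> d x v - 1"
  using dist_cases[of x v] dist_cases[of y v] by auto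

lemma dist_less_1_imp_eq: "y \<in> P \<Longrightarrow> v \<in> P \<Longrightarrow> d y v < 1 \<Longrightarrow> y = v"
  by (cases "y = v") (auto dest: dist_distinct)

lemma greedy_path_nth_mem: "greedy_path P d s u v xs \<Longrightarrow> i < length xs \<Longrightarrow> xs ! i \<in> P"
  unfolding greedy_path_def by (meson nth_mem subsetD)

lemma greedy_path_nth_0: "greedy_path P d s u v xs \<Longrightarrow> xs ! 0 = u"
  unfolding greedy_path_def by (metis hd_conv_nth)

lemma greedy_path_step:
  "greedy_path P d s u v xs \<Longrightarrow> Suc i < length xs \<Longrightarrow>
     xs ! Suc i \<in> s (xs ! i) \<and> d (xs ! Suc i) v < d (xs ! i) v"
  unfolding greedy_path_def by blast

lemma greedy_path_dist_le:
  assumes "u \<in> P" "v \<in> P" and path: "greedy_path P d s u v xs" and "i < length xs"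
  shows "d (xs ! i) v \<le> d u v - real i"
  using \<open>i < length xs\<close>
proof (induction i)
  case 0
  then show ?case using greedy_path_nth_0[OF path] by simp
next
  case (Suc i)
  have "d (xs ! Suc i) v \<le> d (xs ! i) v - 1"
    using Suc.prems greedy_path_step[OF path] greedy_path_nth_mem[OF path] \<open>v \<in> P\<close>
    by (intro dist_less_imp_le_diff_1) auto
  with Suc show ?case by simp
qed

lemma greedy_path_length_le:
  assumes "u \<in> P" "v \<in> P" and path: "greedy_path P d s u v xs"
  shows "length xs \<le> 3"
proof -
  let ?i = "length xs - 1"
  have "xs \<noteq> []" using path by (simp add: greedy_path_def)
  then have "?i < length xs" by simp
  then have "0 \<le> d u v - real ?i"
    using greedy_path_dist_le[OF assms] dist_nonneg[OF greedy_path_nth_mem[OF path] \<open>v \<in> P\<close>]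
    by (meson order_trans)
  moreover have "d u v \<le> 2" using dist_cases[OF \<open>u \<in> P\<close> \<open>v \<in> P\<close>] by auto
  ultimately show ?thesis by linarith
qed

lemma finite_greedy_paths:
  assumes "u \<in> P" "v \<in> P"
  shows "finite {xs. greedy_path P d s u v xs}"
proof (rule finite_subset[OF _ finite_lists_length_le[OF finite_points, of 3]])
  show "{xs. greedy_path P d s u v xs} \<subseteq> {xs. set xs \<subseteq> P \<and> length xs \<le> 3}"
    using greedy_path_length_le[OF assms] by (auto simp: greedy_path_def)
qed

lemma finite_greedy_path_lengths:
  "u \<in> P \<Longrightarrow> v \<in> P \<Longrightarrow> finite {path_length d xs | xs. greedy_path P d s u v xs}"
  using finite_greedy_paths by (simp add: setcompr_eq_image)

lemma greedy_path_arc: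
  assumes "u \<in> P" "v \<in> P" "u \<noteq> v" "v \<in> s u"
  shows "greedy_path P d s u v [u, v]"
  using assms dist_self[OF \<open>v \<in> P\<close>] dist_distinct[OF \<open>u \<in> P\<close> \<open>v \<in> P\<close>]
  unfolding greedy_path_def by (auto simp: less_Suc_eq)

text \<open>A greedy path to v at distance 1 must start with the arc to v itself.\<close>
lemma no_greedy_path_if_unit_arc_missing:
  assumes "u \<in> P" "v \<in> P" "d u v = 1" "v \<notin> s u"
  shows "\<not> greedy_path P d s u v xs"
proof
  assume path: "greedy_path P d s u v xs"
  have "u \<noteq> v" using assms dist_self by auto
  then have "Suc 0 < length xs"
    using path by (cases xs) (auto simp: greedy_path_def)
  then have "xs ! 1 \<in> s u" "d (xs ! 1) v < 1"
    using greedy_path_step[OF path, of 0] greedy_path_nth_0[OF path] assms by auto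
  moreover have "xs ! 1 = v"
    using dist_less_1_imp_eq[OF greedy_path_nth_mem[OF path \<open>Suc 0 < length xs\<close>] \<open>v \<in> P\<close>] calculation
    by simp
  ultimately show False using assms by simp
qed

definition has_unit_arcs :: "'a set \<Rightarrow> ('a \<Rightarrow> 'a set) \<Rightarrow> bool" where
  "has_unit_arcs A s \<longleftrightarrow> (\<forall>x\<in>A. \<forall>v\<in>P. d x v = 1 \<longrightarrow> v \<in> s x)"

text \<open>Beyond its first arc, a greedy path only uses a unit arc into its target.\<close>
lemma greedy_path_transfer:
  assumes "u \<in> P" "v \<in> P" and unit: "has_unit_arcs (P - {u}) s'" and same: "s u = s' u"
    and path: "greedy_path P d s u v xs"
  shows "greedy_path P d s' u v xs"
  unfolding greedy_path_def
proof (intro conjI allI impI)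
  show "xs \<noteq> []" "hd xs = u" "last xs = v" "set xs \<subseteq> P" using path by (auto simp: greedy_path_def)
  fix i assume i: "Suc i < length xs"
  note step = greedy_path_step[OF path i]
  then show "d (xs ! Suc i) v < d (xs ! i) v" by simp
  show "xs ! Suc i \<in> s' (xs ! i)"
  proof (cases i)
    case 0
    then show ?thesis using step greedy_path_nth_0[OF path] same by simp
  next
    case (Suc j)
    have mem: "xs ! i \<in> P" "xs ! Suc i \<in> P" using greedy_path_nth_mem[OF path] i by auto
    have le: "d (xs ! i) v \<le> d u v - 1"
      using greedy_path_dist_le[OF assms(1,2) path, of i] i Suc by simp
    then have "d (xs ! i) v \<le> 1" using dist_cases[OF \<open>u \<in> P\<close> \<open>v \<in> P\<close>] by auto
    moreover have "0 < d (xs ! i) v" using dist_nonneg[OF mem(2) \<open>v \<in> P\<close>] step by simp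
    ultimately have unit_dist: "d (xs ! i) v = 1" using dist_cases[OF mem(1) \<open>v \<in> P\<close>] by auto
    have "xs ! Suc i = v" using dist_less_1_imp_eq[OF mem(2) \<open>v \<in> P\<close>] step unit_dist by simp
    moreover have "xs ! i \<noteq> u" using le by auto
    ultimately show ?thesis using unit mem \<open>v \<in> P\<close> unit_dist unfolding has_unit_arcs_def by blast
  qed
qed

lemma stretch_nonneg:
  assumes "u \<in> P" "v \<in> P" "0 \<le> Z"
  shows "0 \<le> stretch Z P d s u v"
proof (cases "\<exists>xs. greedy_path P d s u v xs")
  case True
  let ?L = "{path_length d xs | xs. greedy_path P d s u v xs}"
  have "Min ?L \<in> ?L"
    using True by (intro Min_in finite_greedy_path_lengths assms) auto
  then obtain xs where "greedy_path P d s u v xs" "Min ?L = path_length d xs" by auto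
  then have "0 \<le> Min ?L"
    unfolding path_length_def by (auto intro!: sum_nonneg dist_nonneg greedy_path_nth_mem)
  then show ?thesis using True dist_nonneg[OF \<open>u \<in> P\<close> \<open>v \<in> P\<close>] by (simp add: stretch_def)
next
  case False
  then show ?thesis using assms by (simp add: stretch_def)
qed

lemma stretch_le_1:
  assumes "u \<in> P" "v \<in> P" "u \<noteq> v" "v \<in> s u"
  shows "stretch Z P d s u v \<le> 1"
proof -
  let ?L = "{path_length d xs | xs. greedy_path P d s u v xs}"
  have path: "greedy_path P d s u v [u, v]" using assms by (rule greedy_path_arc)
  then have "Min ?L \<le> path_length d [u, v]"
    by (intro Min_le finite_greedy_path_lengths assms) auto
  moreover have "0 < d u v" using dist_distinct[OF assms(1-3)] by auto
  ultimately show ?thesis using path by (auto simp: stretch_def path_length_def)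
qed

lemma stretch_unit_arc_missing:
  "u \<in> P \<Longrightarrow> v \<in> P \<Longrightarrow> d u v = 1 \<Longrightarrow> v \<notin> s u \<Longrightarrow> stretch Z P d s u v = Z"
  using no_greedy_path_if_unit_arc_missing by (simp add: stretch_def)

lemma agent_cost_local:
  assumes "u \<in> P" "has_unit_arcs (P - {u}) s" "has_unit_arcs (P - {u}) s'" "s u = s' u"
  shows "agent_cost Z \<alpha> P d s u = agent_cost Z \<alpha> P d s' u"
proof -
  have "stretch Z P d s u v = stretch Z P d s' u v" if "v \<in> P" for v
  proof -
    have "greedy_path P d s u v xs = greedy_path P d s' u v xs" for xs
      using greedy_path_transfer[of u v s' s xs] greedy_path_transfer[of u v s s' xs] assms that
      by auto
    then show ?thesis by (simp add: stretch_def)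
  qed
  then show ?thesis using \<open>s u = s' u\<close> by (simp add: agent_cost_def)
qed

lemma agent_cost_nonneg:
  "u \<in> P \<Longrightarrow> 0 \<le> Z \<Longrightarrow> 0 \<le> \<alpha> \<Longrightarrow> 0 \<le> agent_cost Z \<alpha> P d s u"
  unfolding agent_cost_def by (auto intro!: add_nonneg_nonneg sum_nonneg stretch_nonneg)

lemma agent_cost_unit_arc_missing:
  assumes "u \<in> P" "v \<in> P" "d u v = 1" "v \<notin> s u" "0 \<le> Z" "0 \<le> \<alpha>"
  shows "Z \<le> agent_cost Z \<alpha> P d s u"
proof -
  have "v \<in> P - {u}" using assms dist_self by auto
  then have "stretch Z P d s u v \<le> (\<Sum>w\<in>P - {u}. stretch Z P d s u w)"
    using assms finite_points by (intro member_le_sum stretch_nonneg) auto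
  then show ?thesis
    using stretch_unit_arc_missing[of u v s Z] assms
    by (simp add: agent_cost_def add_increasing2)
qed

lemma agent_cost_buy_all_le:
  assumes "u \<in> P" "s u = P - {u}" "0 \<le> \<alpha>"
  shows "agent_cost Z \<alpha> P d s u \<le> real (card P) * (1 + \<alpha>)"
proof -
  have card: "card (P - {u}) \<le> card P" using finite_points by (simp add: card_mono)
  have "(\<Sum>w\<in>P - {u}. stretch Z P d s u w) \<le> real (card (P - {u})) * 1"
    using assms by (intro sum_bounded_above stretch_le_1) auto
  moreover have "\<alpha> * real (card (s u)) \<le> \<alpha> * real (card P)"
    using card assms by (simp add: mult_left_mono)
  ultimately show ?thesis using card by (simp add: agent_cost_def algebra_simps)
qed

lemma social_cost_split:
  "u \<in> P \<Longrightarrow> social_cost Z \<alpha> P d s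
     = agent_cost Z \<alpha> P d s u + (\<Sum>w\<in>P - {u}. agent_cost Z \<alpha> P d s w)"
  unfolding social_cost_def using sum.remove[OF finite_points] by blast

lemma social_cost_unit_arc_missing:
  assumes "\<not> has_unit_arcs P s" "0 \<le> Z" "0 \<le> \<alpha>"
  shows "Z \<le> social_cost Z \<alpha> P d s"
proof -
  obtain u v where uv: "u \<in> P" "v \<in> P" "d u v = 1" "v \<notin> s u"
    using assms(1) unfolding has_unit_arcs_def by blast
  have "0 \<le> (\<Sum>w\<in>P - {u}. agent_cost Z \<alpha> P d s w)"
    using assms by (intro sum_nonneg agent_cost_nonneg) auto
  then show ?thesis
    using social_cost_split[OF uv(1)] agent_cost_unit_arc_missing[of u v s Z \<alpha>] uv assms(2,3) by simp
qed

lemma social_cost_fun_upd: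
  assumes "u \<in> P" "has_unit_arcs P s" "has_unit_arcs P (s(u := T))"
  shows "social_cost Z \<alpha> P d (s(u := T)) - agent_cost Z \<alpha> P d (s(u := T)) u
       = social_cost Z \<alpha> P d s - agent_cost Z \<alpha> P d s u"
proof -
  have "agent_cost Z \<alpha> P d (s(u := T)) w = agent_cost Z \<alpha> P d s w" if "w \<in> P - {u}" for w
    using that assms by (intro agent_cost_local) (auto simp: has_unit_arcs_def)
  then have "(\<Sum>w\<in>P - {u}. agent_cost Z \<alpha> P d (s(u := T)) w)
           = (\<Sum>w\<in>P - {u}. agent_cost Z \<alpha> P d s w)"
    by (rule sum.cong[OF refl])
  then show ?thesis using social_cost_split[OF \<open>u \<in> P\<close>] by simp
qed

context
  fixes Z \<alpha> :: real
  assumes alpha_nonneg: "0 \<le> \<alpha>" and penalty_large: "real (card P) ^ 2 * (1 + \<alpha>) < Z"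
begin

lemma buy_all_bound_less_penalty: "real (card P) * (1 + \<alpha>) < Z"
proof -
  have "real (card P) \<le> real (card P) ^ 2" by (cases "card P") (auto simp: power2_eq_square)
  then have "real (card P) * (1 + \<alpha>) \<le> real (card P) ^ 2 * (1 + \<alpha>)"
    using alpha_nonneg by (intro mult_right_mono) auto
  then show ?thesis using penalty_large by linarith
qed

lemma penalty_nonneg: "0 \<le> Z"
proof -
  have "0 \<le> real (card P) ^ 2 * (1 + \<alpha>)" using alpha_nonneg by simp
  then show ?thesis using penalty_large by linarith
qed

lemma social_cost_buy_all_less_penalty:
  assumes "\<forall>x\<in>P. s x = P - {x}"
  shows "social_cost Z \<alpha> P d s < Z"
proof -
  have "social_cost Z \<alpha> P d s \<le> real (card P) * (real (card P) * (1 + \<alpha>))"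
    unfolding social_cost_def using assms alpha_nonneg
    by (intro sum_bounded_above agent_cost_buy_all_le) auto
  then show ?thesis using penalty_large by (simp add: power2_eq_square mult.assoc)
qed

lemma nash_equilibrium_agent_cost_le:
  assumes "nash_equilibrium Z \<alpha> P d s" "u \<in> P"
  shows "agent_cost Z \<alpha> P d s u \<le> real (card P) * (1 + \<alpha>)"
proof -
  have "agent_cost Z \<alpha> P d s u \<le> agent_cost Z \<alpha> P d (s(u := P - {u})) u"
    using assms unfolding nash_equilibrium_def by blast
  also have "\<dots> \<le> real (card P) * (1 + \<alpha>)"
    using assms alpha_nonneg by (intro agent_cost_buy_all_le) auto
  finally show ?thesis .
qed

lemma nash_equilibrium_has_unit_arcs:
  assumes "nash_equilibrium Z \<alpha> P d s"
  shows "has_unit_arcs P s"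
proof (rule ccontr)
  assume "\<not> has_unit_arcs P s"
  then obtain u v where "u \<in> P" "v \<in> P" "d u v = 1" "v \<notin> s u"
    unfolding has_unit_arcs_def by blast
  then have "Z \<le> agent_cost Z \<alpha> P d s u"
    using agent_cost_unit_arc_missing[of u v s Z \<alpha>] penalty_nonneg alpha_nonneg by simp
  then show False
    using nash_equilibrium_agent_cost_le[OF assms \<open>u \<in> P\<close>] buy_all_bound_less_penalty by linarith
qed

lemma social_optimum_has_unit_arcs:
  assumes "social_optimum Z \<alpha> P d s"
  shows "has_unit_arcs P s"
proof (rule ccontr)
  let ?all = "\<lambda>x. P - {x}"
  assume "\<not> has_unit_arcs P s"
  then have "Z \<le> social_cost Z \<alpha> P d s"
    using social_cost_unit_arc_missing[of s] penalty_nonneg alpha_nonneg by simp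
  moreover have "valid_profile P ?all" by (simp add: valid_profile_def)
  then have "social_cost Z \<alpha> P d s \<le> social_cost Z \<alpha> P d ?all"
    using assms unfolding social_optimum_def by blast
  ultimately show False using social_cost_buy_all_less_penalty[of ?all] by simp
qed

lemma social_optimum_no_profitable_unit_deviation:
  assumes opt: "social_optimum Z \<alpha> P d s" and "u \<in> P" "T \<subseteq> P - {u}"
    and unit: "has_unit_arcs P (s(u := T))"
  shows "agent_cost Z \<alpha> P d s u \<le> agent_cost Z \<alpha> P d (s(u := T)) u"
proof -
  have "valid_profile P (s(u := T))"
    using opt assms(2,3) by (auto simp: social_optimum_def valid_profile_def)
  then have "social_cost Z \<alpha> P d s \<le> social_cost Z \<alpha> P d (s(u := T))"
    using opt unfolding social_optimum_def by blast
  then show ?thesis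
    using social_cost_fun_upd[OF \<open>u \<in> P\<close> social_optimum_has_unit_arcs[OF opt] unit, of Z \<alpha>]
    by linarith
qed

lemma nash_equilibrium_imp_social_optimum:
  assumes ne: "nash_equilibrium Z \<alpha> P d s"
  shows "social_optimum Z \<alpha> P d s"
  unfolding social_optimum_def
proof (intro conjI allI impI)
  show "valid_profile P s" using ne by (simp add: nash_equilibrium_def)
  fix s' assume valid: "valid_profile P s'"
  show "social_cost Z \<alpha> P d s \<le> social_cost Z \<alpha> P d s'"
  proof (cases "has_unit_arcs P s'")
    case False
    have "social_cost Z \<alpha> P d s \<le> real (card P) * (real (card P) * (1 + \<alpha>))"
      unfolding social_cost_def using nash_equilibrium_agent_cost_le[OF ne]
      by (intro sum_bounded_above) auto
    then show ?thesis
      using social_cost_unit_arc_missing[OF False penalty_nonneg alpha_nonneg] penalty_large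
      by (simp add: power2_eq_square mult.assoc)
  next
    case True
    have "agent_cost Z \<alpha> P d s u \<le> agent_cost Z \<alpha> P d s' u" if "u \<in> P" for u
    proof -
      have "agent_cost Z \<alpha> P d s u \<le> agent_cost Z \<alpha> P d (s(u := s' u)) u"
        using ne valid that unfolding nash_equilibrium_def valid_profile_def by blast
      also have "\<dots> = agent_cost Z \<alpha> P d s' u"
        using that True nash_equilibrium_has_unit_arcs[OF ne]
        by (intro agent_cost_local) (auto simp: has_unit_arcs_def)
      finally show ?thesis .
    qed
    then show ?thesis unfolding social_cost_def by (rule sum_mono)
  qed
qed

lemma social_optimum_imp_nash_equilibrium:
  assumes opt: "social_optimum Z \<alpha> P d s"
  shows "nash_equilibrium Z \<alpha> P d s"
  unfolding nash_equilibrium_def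
proof (intro conjI ballI allI impI)
  show "valid_profile P s" using opt by (simp add: social_optimum_def)
  have unit: "has_unit_arcs P s" by (rule social_optimum_has_unit_arcs[OF opt])
  fix u T assume u: "u \<in> P" and T: "T \<subseteq> P - {u}"
  show "agent_cost Z \<alpha> P d s u \<le> agent_cost Z \<alpha> P d (s(u := T)) u"
  proof (cases "has_unit_arcs P (s(u := T))")
    case True
    then show ?thesis using social_optimum_no_profitable_unit_deviation[OF opt u T] by blast
  next
    case False
    then obtain v where "v \<in> P" "d u v = 1" "v \<notin> T"
      using unit unfolding has_unit_arcs_def by (auto split: if_splits)
    then have "Z \<le> agent_cost Z \<alpha> P d (s(u := T)) u"
      using agent_cost_unit_arc_missing[OF u] penalty_nonneg alpha_nonneg by simp
    moreover have "agent_cost Z \<alpha> P d s u \<le> agent_cost Z \<alpha> P d (s(u := P - {u})) u"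
      using unit dist_self u
      by (intro social_optimum_no_profitable_unit_deviation[OF opt]) (auto simp: has_unit_arcs_def)
    moreover have "agent_cost Z \<alpha> P d (s(u := P - {u})) u \<le> real (card P) * (1 + \<alpha>)"
      using u alpha_nonneg by (intro agent_cost_buy_all_le) auto
    ultimately show ?thesis using buy_all_bound_less_penalty by linarith
  qed
qed

end

end

theorem theorem2p4:
  fixes P :: "'a set" and d :: "'a \<Rightarrow> 'a \<Rightarrow> real" and \<alpha> :: real
  assumes "finite P" and "card P \<ge> 2" and "one_two_metric P d" and "\<alpha> > 0"
  shows "\<exists>Z0. \<forall>Z \<ge> Z0. \<forall>s.
           (nash_equilibrium Z \<alpha> P d s \<longrightarrow> social_optimum Z \<alpha> P d s) \<and>
           (social_optimum Z \<alpha> P d s \<longrightarrow> nash_equilibrium Z \<alpha> P d s)"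
proof -
  interpret one_two_metric_space P d
    using assms by unfold_locales
  have "0 \<le> \<alpha>" using \<open>\<alpha> > 0\<close> by simp
  show ?thesis
  proof (intro exI[of _ "real (card P) ^ 2 * (1 + \<alpha>) + 1"] allI impI conjI)
    fix Z s assume "real (card P) ^ 2 * (1 + \<alpha>) + 1 \<le> Z"
    then have "real (card P) ^ 2 * (1 + \<alpha>) < Z" by simp
    note large = \<open>0 \<le> \<alpha>\<close> this
    show "nash_equilibrium Z \<alpha> P d s \<Longrightarrow> social_optimum Z \<alpha> P d s"
      by (rule nash_equilibrium_imp_social_optimum[OF large])
    show "social_optimum Z \<alpha> P d s \<Longrightarrow> nash_equilibrium Z \<alpha> P d s"
      by (rule social_optimum_imp_nash_equilibrium[OF large])
  qed
qed

end
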